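(* For any contraction $C\in M_n(\mathbb{C})$, the following are equivalent: (i) every level $T_j$ ($j\ge0$) of the partial isometry tower of $C$ has the Circularity property; (ii) $C$ has defect-pencil Circularity.
   Context: For $X\in M_n(\mathbb{C})$, $H_X(\theta):=\frac12(e^{-i\theta}X+e^{i\theta}X^* )$. $X$ has the Circularity property if the spectrum of $H_X(\theta)$ is independent of $\theta\in\mathbb{R}$. A contraction is a matrix with $\|C\|\le1$. A contraction $C$ has defect-pencil Circularity if for every real $\tau$ the spectrum of $H_C(\theta)+\tau(I-C^*C)$ is independent of $\theta$. For a contraction $C$: $D_C=I-C^*C$, $d=\operatorname{rank}D_C$, $B_C$ is a $d\times n$ matrix of full row rank with $B_C^*B_C=D_C$ (matrix of $D_C^{1/2}$ on $\operatorname{Im}D_C$, zero on its complement), $\mathcal{A}(C)=\begin{bmatrix}0&B_C\\0&C\end{bmatrix}$, and the partial isometry tower is $T_0=C$, $T_{j+1}=\mathcal{A}(T_j)$. *)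

theory Defs
  imports "Jordan_Normal_Form.Spectral_Radius" "Jordan_Normal_Form.Schur_Decomposition" "Jordan_Normal_Form.DL_Rank"
begin

definition herm_part :: "complex mat \<Rightarrow> real \<Rightarrow> complex mat" where
  "herm_part X \<theta> = (1/2 :: complex) \<cdot>\<^sub>m
     (exp (- \<i> * of_real \<theta>) \<cdot>\<^sub>m X + exp (\<i> * of_real \<theta>) \<cdot>\<^sub>m mat_adjoint X)"

definition circularity :: "complex mat \<Rightarrow> bool" where
  "circularity X \<longleftrightarrow> (\<forall>\<theta> \<theta>'. spectrum (herm_part X \<theta>) = spectrum (herm_part X \<theta>'))"

definition contraction :: "complex mat \<Rightarrow> bool" where
  "contraction C \<longleftrightarrow> square_mat C \<and>
     (\<forall>v \<in> carrier_vec (dim_col C).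
        Re ((C *\<^sub>v v) \<bullet> conjugate (C *\<^sub>v v)) \<le> Re (v \<bullet> conjugate v))"

definition defect :: "complex mat \<Rightarrow> complex mat" where
  "defect C = 1\<^sub>m (dim_col C) - mat_adjoint C * C"

definition defect_pencil_circularity :: "complex mat \<Rightarrow> bool" where
  "defect_pencil_circularity C \<longleftrightarrow>
     (\<forall>\<tau>::real. \<forall>\<theta> \<theta>'.
        spectrum (herm_part C \<theta> + complex_of_real \<tau> \<cdot>\<^sub>m defect C)
        = spectrum (herm_part C \<theta>' + complex_of_real \<tau> \<cdot>\<^sub>m defect C))"

definition mat_rank :: "complex mat \<Rightarrow> nat" where
  "mat_rank A = vec_space.rank (dim_row A) A"

definition is_defect_factor :: "complex mat \<Rightarrow> complex mat \<Rightarrow> bool" where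
  "is_defect_factor C B \<longleftrightarrow>
     B \<in> carrier_mat (mat_rank (defect C)) (dim_col C) \<and>
     mat_rank B = dim_row B \<and>
     mat_adjoint B * B = defect C"

definition defect_factor :: "complex mat \<Rightarrow> complex mat" where
  "defect_factor C = (SOME B. is_defect_factor C B)"

definition tower_step :: "complex mat \<Rightarrow> complex mat" where
  "tower_step C = (let B = defect_factor C; d = dim_row B; n = dim_col C in
     four_block_mat (0\<^sub>m d d) B (0\<^sub>m n d) C)"

definition tower :: "complex mat \<Rightarrow> nat \<Rightarrow> complex mat" where
  "tower C j = (tower_step ^^ j) C"

end

theory Submission
  imports Defs "HOL-Analysis.Elementary_Normed_Spaces"
begin

(* Write p_Y(theta, s) for the characteristic polynomial of H_Y(theta) + s D_Y.  The defect of
   A(Y) = [[0, B], [0, Y]] is diag(I_d, 0), and since B^* B = D_Y a Schur complement gives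
     p_A(Y)(theta, s)(z) = (z - s)^d p_Y(theta, 1/(4(z - s)))(z)     for z ~= s.
   Circularity of Y says that p_Y(theta, 0) does not depend on theta (a continuous family of
   characteristic polynomials with constant spectrum has finite range, hence is constant), and
   defect-pencil circularity says the same for every s (p_Y is polynomial in s, so real s
   suffice).  The identity carries theta-independence for all s up the tower.  Conversely, fix
   a real z >= 1: theta-independence at s = 0 on every level descends one level along
   s_(k+1) = 1/(4(z - s_k)), a strictly increasing orbit, so p_C(theta, s)(z) is
   theta-independent for infinitely many s, hence for all s.  The factor B_C itself comes from
   a Cholesky-type factorization of the positive semidefinite matrix D_C. *)

lemma mat_adjoint_dim [simp]:
  "dim_row (mat_adjoint A) = dim_col A" "dim_col (mat_adjoint A) = dim_row A"
  unfolding mat_adjoint_def by auto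

lemma mat_adjoint_index [simp]:
  "i < dim_col A \<Longrightarrow> j < dim_row A \<Longrightarrow> mat_adjoint A $$ (i,j) = conjugate (A $$ (j,i))"
  unfolding mat_adjoint_def by (auto simp: mat_of_rows_def)

lemma mat_adjoint_carrier [simp]: "A \<in> carrier_mat n m \<Longrightarrow> mat_adjoint A \<in> carrier_mat m n"
  by (metis mat_adjoint_dim carrier_matD carrier_matI)

lemma mat_adjoint_four_block_mat:
  assumes "A1 \<in> carrier_mat n1 m1" "A2 \<in> carrier_mat n1 m2" "A3 \<in> carrier_mat n2 m1" "A4 \<in> carrier_mat n2 m2"
  shows "mat_adjoint (four_block_mat A1 A2 A3 A4) =
    four_block_mat (mat_adjoint A1) (mat_adjoint A3) (mat_adjoint A2) (mat_adjoint A4)"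
  by (rule eq_matI) (use assms in auto)

lemma mat_adjoint_mult_self_index:
  fixes A :: "complex mat"
  assumes "A \<in> carrier_mat r n" and "j < n" and "l < n"
  shows "(mat_adjoint A * A) $$ (j,l) = (\<Sum>i<r. cnj (A $$ (i,j)) * A $$ (i,l))"
  using assms by (auto simp: scalar_prod_def atLeast0LessThan intro!: sum.cong)

lemma mat_adjoint_mult_vec_index:
  fixes A :: "complex mat"
  assumes "A \<in> carrier_mat r n" and "x \<in> carrier_vec r" and "j < n"
  shows "(mat_adjoint A *\<^sub>v x) $ j = (\<Sum>i<r. cnj (A $$ (i,j)) * x $ i)"
  using assms by (auto simp: scalar_prod_def atLeast0LessThan intro!: sum.cong)

lemma cscalar_prod_mat_adjoint:
  fixes A :: "complex mat"
  assumes A: "A \<in> carrier_mat n m" and x: "x \<in> carrier_vec n" and y: "y \<in> carrier_vec m"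
  shows "(mat_adjoint A *\<^sub>v x) \<bullet>c y = x \<bullet>c (A *\<^sub>v y)"
proof -
  have "(mat_adjoint A *\<^sub>v x) \<bullet>c y = (\<Sum>j<m. (\<Sum>i<n. cnj (A $$ (i,j)) * x $ i) * cnj (y $ j))"
    using A x y by (auto simp: scalar_prod_def atLeast0LessThan intro!: sum.cong)
  also have "\<dots> = (\<Sum>i<n. \<Sum>j<m. x $ i * cnj (A $$ (i,j) * y $ j))"
    by (subst sum.swap) (simp add: sum_distrib_right sum_distrib_left mult_ac)
  also have "\<dots> = x \<bullet>c (A *\<^sub>v y)"
    using A x y by (auto simp: scalar_prod_def atLeast0LessThan sum_distrib_left cnj_sum intro!: sum.cong)
  finally show ?thesis .
qed

lemma herm_part_dim [simp]: "dim_row (herm_part X \<theta>) = dim_col X" "dim_col (herm_part X \<theta>) = dim_row X"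
  unfolding herm_part_def by auto

lemma herm_part_carrier [simp]: "X \<in> carrier_mat n n \<Longrightarrow> herm_part X \<theta> \<in> carrier_mat n n"
  by (metis herm_part_dim carrier_matD carrier_matI)

lemma herm_part_index:
  "X \<in> carrier_mat n n \<Longrightarrow> i < n \<Longrightarrow> j < n \<Longrightarrow> herm_part X \<theta> $$ (i,j) =
    (exp (- \<i> * of_real \<theta>) * X $$ (i,j) + exp (\<i> * of_real \<theta>) * cnj (X $$ (j,i))) / 2"
  unfolding herm_part_def by auto

lemma defect_dim [simp]: "dim_row (defect X) = dim_col X" "dim_col (defect X) = dim_col X"
  unfolding defect_def by auto

lemma defect_carrier [simp]: "X \<in> carrier_mat n n \<Longrightarrow> defect X \<in> carrier_mat n n"
  unfolding defect_def by auto

section \<open>Constant spectrum forces a constant characteristic polynomial\<close>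

lemma continuous_on_det:
  fixes M :: "'a :: topological_space \<Rightarrow> complex mat"
  assumes car: "\<And>t. M t \<in> carrier_mat n n"
    and cont: "\<And>i j. i < n \<Longrightarrow> j < n \<Longrightarrow> continuous_on S (\<lambda>t. M t $$ (i,j))"
  shows "continuous_on S (\<lambda>t. det (M t))"
proof -
  have "(\<lambda>t. det (M t)) =
      (\<lambda>t. \<Sum>p\<in>{p. p permutes {0..<n}}. of_int (sign p) * (\<Prod>i=0..<n. M t $$ (i, p i)))"
    using det_def'[OF car] by auto
  moreover have "continuous_on S (\<lambda>t. M t $$ (i, p i))" if "p permutes {0..<n}" "i \<in> {0..<n}" for p i
    using cont that by (auto simp: permutes_in_image)
  ultimately show ?thesis
    by (simp only:) (auto intro!: continuous_on_sum continuous_on_mult continuous_on_const continuous_on_prod)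
qed

lemma char_poly_constant_if_spectrum_constant:
  fixes M :: "real \<Rightarrow> complex mat"
  assumes car: "\<And>t. M t \<in> carrier_mat n n"
    and cont: "\<And>i j. i < n \<Longrightarrow> j < n \<Longrightarrow> continuous_on UNIV (\<lambda>t. M t $$ (i,j))"
    and sp: "\<And>t. spectrum (M t) = spectrum (M 0)"
  shows "char_poly (M t) = char_poly (M 0)"
proof -
  define S where "S = spectrum (M 0)"
  have "finite S" unfolding S_def using card_finite_spectrum[OF car] by auto
  define Q where "Q = (\<lambda>as. \<Prod>a\<leftarrow>as. [:-a,1:]) ` {as. set as \<subseteq> S \<and> length as = n}"
  have finQ: "finite Q" unfolding Q_def using finite_lists_length_eq[OF \<open>finite S\<close>] by auto
  have inQ: "char_poly (M t) \<in> Q" for t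
  proof -
    obtain as where as: "char_poly (M t) = (\<Prod>a\<leftarrow>as. [:-a,1:])" "length as = n"
      using char_poly_factorized[OF car] by blast
    have "poly (char_poly (M t)) a = 0" if "a \<in> set as" for a
      unfolding as(1) poly_prod_list using that by (induct as) auto
    then have "set as \<subseteq> spectrum (M t)"
      using spectrum_root_char_poly[OF car] by auto
    then have "set as \<subseteq> S" using sp S_def by auto
    then show ?thesis unfolding Q_def using as by auto
  qed
  have "poly (char_poly (M t)) z = poly (char_poly (M 0)) z" for z
  proof -
    define f where "f = (\<lambda>t. poly (char_poly (M t)) z)"
    have f_eq: "f = (\<lambda>t. det (- char_matrix (M t) z))"
      unfolding f_def using char_poly_matrix[OF car] by auto
    have "continuous_on UNIV f" unfolding f_eq
    proof (rule continuous_on_det[where n = n])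
      show "- char_matrix (M t) z \<in> carrier_mat n n" for t using car[of t] by auto
      fix i j assume ij: "i < n" "j < n"
      have "(- char_matrix (M t) z) $$ (i,j) = - (M t $$ (i,j) + (if i = j then -z else 0))" for t
        using car[of t] ij by (auto simp: char_matrix_def)
      then have entry: "(\<lambda>t. (- char_matrix (M t) z) $$ (i,j)) =
          (\<lambda>t. - (M t $$ (i,j) + (if i = j then -z else 0)))"
        by auto
      show "continuous_on UNIV (\<lambda>t. (- char_matrix (M t) z) $$ (i,j))"
        unfolding entry by (intro continuous_intros cont[OF ij])
    qed
    moreover have "finite (f ` UNIV)"
      using inQ finQ finite_subset[of "f ` UNIV" "(\<lambda>q. poly q z) ` Q"] unfolding f_def by auto
    ultimately have "f constant_on UNIV"
      using continuous_finite_range_constant[OF connected_UNIV] by blast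
    then show ?thesis unfolding f_def constant_on_def by (metis UNIV_I)
  qed
  then show ?thesis using poly_eq_poly_eq_iff by blast
qed

lemma poly_eq_if_agree_on_infinite:
  fixes p q :: "'a :: idom poly"
  assumes "infinite S" and "\<And>x. x \<in> S \<Longrightarrow> poly p x = poly q x"
  shows "p = q"
proof (rule ccontr)
  assume "p \<noteq> q"
  then have "finite {x. poly (p - q) x = 0}" by (intro poly_roots_finite) simp
  moreover have "S \<subseteq> {x. poly (p - q) x = 0}" using assms(2) by auto
  ultimately show False using assms(1) finite_subset by blast
qed

section \<open>The pencil polynomial\<close>

definition pencil_poly :: "complex mat \<Rightarrow> real \<Rightarrow> complex \<Rightarrow> complex poly" where
  "pencil_poly Y \<theta> s = char_poly (herm_part Y \<theta> + s \<cdot>\<^sub>m defect Y)"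

definition pencil_rotation_invariant :: "complex mat \<Rightarrow> complex \<Rightarrow> bool" where
  "pencil_rotation_invariant Y s \<longleftrightarrow> (\<forall>\<theta>. pencil_poly Y \<theta> s = pencil_poly Y 0 s)"

lemma spectrum_pencil:
  assumes "Y \<in> carrier_mat m m"
  shows "spectrum (herm_part Y \<theta> + s \<cdot>\<^sub>m defect Y) = {z. poly (pencil_poly Y \<theta> s) z = 0}"
  unfolding pencil_poly_def by (rule spectrum_root_char_poly[where n = m]) (use assms in auto)

lemma pencil_rotation_invariant_iff_spectrum:
  assumes Y: "Y \<in> carrier_mat m m"
  shows "pencil_rotation_invariant Y s \<longleftrightarrow>
    (\<forall>\<theta> \<theta>'. spectrum (herm_part Y \<theta> + s \<cdot>\<^sub>m defect Y) = spectrum (herm_part Y \<theta>' + s \<cdot>\<^sub>m defect Y))"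
proof
  assume "pencil_rotation_invariant Y s"
  then show "\<forall>\<theta> \<theta>'. spectrum (herm_part Y \<theta> + s \<cdot>\<^sub>m defect Y) = spectrum (herm_part Y \<theta>' + s \<cdot>\<^sub>m defect Y)"
    unfolding spectrum_pencil[OF Y] pencil_rotation_invariant_def by metis
next
  assume sp: "\<forall>\<theta> \<theta>'. spectrum (herm_part Y \<theta> + s \<cdot>\<^sub>m defect Y) = spectrum (herm_part Y \<theta>' + s \<cdot>\<^sub>m defect Y)"
  have "char_poly (herm_part Y \<theta> + s \<cdot>\<^sub>m defect Y) = char_poly (herm_part Y 0 + s \<cdot>\<^sub>m defect Y)" for \<theta>
  proof (rule char_poly_constant_if_spectrum_constant[where M = "\<lambda>\<theta>. herm_part Y \<theta> + s \<cdot>\<^sub>m defect Y"])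
    show "herm_part Y \<theta> + s \<cdot>\<^sub>m defect Y \<in> carrier_mat m m" for \<theta> using Y by auto
    fix i j assume i: "i < m" and j: "j < m"
    then have entry: "(\<lambda>\<theta>. (herm_part Y \<theta> + s \<cdot>\<^sub>m defect Y) $$ (i,j)) = (\<lambda>\<theta>.
        (exp (- \<i> * of_real \<theta>) * Y $$ (i,j) + exp (\<i> * of_real \<theta>) * cnj (Y $$ (j,i))) / 2
        + s * defect Y $$ (i,j))"
      using Y by (auto simp: herm_part_index)
    show "continuous_on UNIV (\<lambda>\<theta>. (herm_part Y \<theta> + s \<cdot>\<^sub>m defect Y) $$ (i,j))"
      unfolding entry by (intro continuous_intros) auto
  qed (use sp in blast)
  then show "pencil_rotation_invariant Y s"
    unfolding pencil_rotation_invariant_def pencil_poly_def by blast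
qed

lemma circularity_iff_pencil_rotation_invariant:
  assumes "Y \<in> carrier_mat m m"
  shows "circularity Y \<longleftrightarrow> pencil_rotation_invariant Y 0"
proof -
  have "herm_part Y \<theta> + 0 \<cdot>\<^sub>m defect Y = herm_part Y \<theta>" for \<theta>
    by (rule eq_matI) (use assms in auto)
  then show ?thesis
    unfolding circularity_def pencil_rotation_invariant_iff_spectrum[OF assms] by simp
qed

lemma poly_pencil_poly_in_shift:
  assumes Y: "Y \<in> carrier_mat m m"
  obtains p where "\<And>s. poly (pencil_poly Y \<theta> s) z = poly p s"
proof -
  define H where "H = herm_part Y \<theta>"
  define D where "D = defect Y"
  have H: "H \<in> carrier_mat m m" and D: "D \<in> carrier_mat m m" unfolding H_def D_def using Y by auto
  define P where "P = Matrix.mat m m (\<lambda>(i,j). [: - H $$ (i,j) + (if i = j then z else 0), - D $$ (i,j) :])"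
  have "poly (pencil_poly Y \<theta> s) z = poly (det P) s" for s
  proof -
    have "poly (pencil_poly Y \<theta> s) z = det (- char_matrix (H + s \<cdot>\<^sub>m D) z)"
      unfolding pencil_poly_def H_def D_def by (rule char_poly_matrix[where n = m]) (use Y in auto)
    also have "\<dots> = poly (det P) s"
      by (rule poly_det_cong[symmetric, where n = m])
        (use H D in \<open>auto simp: P_def char_matrix_def algebra_simps\<close>)
    finally show ?thesis .
  qed
  then show ?thesis using that by blast
qed

lemma pencil_poly_eval_eq_if_infinite_shifts:
  assumes Y: "Y \<in> carrier_mat m m" and S: "infinite S"
    and eq: "\<And>s. s \<in> S \<Longrightarrow> poly (pencil_poly Y \<theta> s) z = poly (pencil_poly Y \<theta>' s) z"
  shows "poly (pencil_poly Y \<theta> s) z = poly (pencil_poly Y \<theta>' s) z"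
proof -
  obtain p where p: "\<And>s. poly (pencil_poly Y \<theta> s) z = poly p s"
    using poly_pencil_poly_in_shift[OF Y] by blast
  obtain q where q: "\<And>s. poly (pencil_poly Y \<theta>' s) z = poly q s"
    using poly_pencil_poly_in_shift[OF Y] by blast
  have "p = q" by (rule poly_eq_if_agree_on_infinite[OF S]) (use eq p q in auto)
  then show ?thesis using p q by simp
qed

lemma defect_pencil_circularity_iff:
  assumes C: "C \<in> carrier_mat n n"
  shows "defect_pencil_circularity C \<longleftrightarrow> (\<forall>s. pencil_rotation_invariant C s)"
proof
  assume "\<forall>s. pencil_rotation_invariant C s"
  then show "defect_pencil_circularity C"
    unfolding defect_pencil_circularity_def pencil_rotation_invariant_iff_spectrum[OF C] by blast
next
  assume "defect_pencil_circularity C"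
  then have real: "pencil_poly C \<theta> (of_real \<tau>) = pencil_poly C 0 (of_real \<tau>)" for \<theta> \<tau>
    unfolding defect_pencil_circularity_def
    using pencil_rotation_invariant_iff_spectrum[OF C] pencil_rotation_invariant_def by blast
  have inf: "infinite (range complex_of_real)"
    using infinite_UNIV_char_0 finite_imageD[of complex_of_real UNIV] by (auto simp: inj_on_def)
  have "poly (pencil_poly C \<theta> s) z = poly (pencil_poly C 0 s) z" for \<theta> s z
    by (rule pencil_poly_eval_eq_if_infinite_shifts[OF C inf]) (metis real rangeE)
  then show "\<forall>s. pencil_rotation_invariant C s"
    unfolding pencil_rotation_invariant_def using poly_eq_poly_eq_iff by blast
qed

lemma cscalar_prod_mat_adjoint_mult_self:
  fixes A :: "complex mat"
  assumes A: "A \<in> carrier_mat r n" and v: "v \<in> carrier_vec n"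
  shows "((mat_adjoint A * A) *\<^sub>v v) \<bullet>c v = (A *\<^sub>v v) \<bullet>c (A *\<^sub>v v)"
  using cscalar_prod_mat_adjoint[OF A _ v, of "A *\<^sub>v v"] assoc_mult_mat_vec[OF mat_adjoint_carrier[OF A] A v]
    A v by simp

lemma cscalar_prod_defect:
  fixes X :: "complex mat"
  assumes X: "X \<in> carrier_mat n n" and v: "v \<in> carrier_vec n"
  shows "(defect X *\<^sub>v v) \<bullet>c v = v \<bullet>c v - (X *\<^sub>v v) \<bullet>c (X *\<^sub>v v)"
proof -
  have XX: "mat_adjoint X * X \<in> carrier_mat n n" using mult_carrier_mat[OF mat_adjoint_carrier[OF X] X] .
  have "defect X *\<^sub>v v = v - (mat_adjoint X * X) *\<^sub>v v"
    unfolding defect_def using minus_mult_distrib_mat_vec[OF one_carrier_mat XX v] X v by simp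
  then have "(defect X *\<^sub>v v) \<bullet>c v = v \<bullet>c v - ((mat_adjoint X * X) *\<^sub>v v) \<bullet>c v"
    using minus_scalar_prod_distrib[OF v mult_mat_vec_carrier[OF XX v], of "conjugate v"] v by simp
  then show ?thesis using cscalar_prod_mat_adjoint_mult_self[OF X v] by simp
qed

lemma contraction_iff_defect_nonneg:
  fixes X :: "complex mat"
  assumes X: "X \<in> carrier_mat n n"
  shows "contraction X \<longleftrightarrow> (\<forall>v \<in> carrier_vec n. 0 \<le> Re ((defect X *\<^sub>v v) \<bullet>c v))"
  unfolding contraction_def using X by (auto simp: cscalar_prod_defect)

lemma contraction_if_defect_eq_adjoint_mult:
  fixes A E :: "complex mat"
  assumes A: "A \<in> carrier_mat n n" and E: "E \<in> carrier_mat r n"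
    and EE: "mat_adjoint E * E = defect A"
  shows "contraction A"
  unfolding contraction_iff_defect_nonneg[OF A] EE[symmetric]
proof
  fix v :: "complex Matrix.vec" assume "v \<in> carrier_vec n"
  moreover have "0 \<le> (E *\<^sub>v v) \<bullet>c (E *\<^sub>v v)" by (rule conjugate_square_ge_0_vec)
  ultimately show "0 \<le> Re (((mat_adjoint E * E) *\<^sub>v v) \<bullet>c v)"
    using cscalar_prod_mat_adjoint_mult_self[OF E] by (simp add: less_eq_complex_def)
qed

section \<open>One step of the tower\<close>

lemma det_four_block_mat_scalar_corner:
  fixes P Q N :: "'a :: field mat"
  assumes P: "P \<in> carrier_mat d m" and Q: "Q \<in> carrier_mat m d" and N: "N \<in> carrier_mat m m"
    and a: "a \<noteq> 0"
  shows "det (four_block_mat (a \<cdot>\<^sub>m 1\<^sub>m d) P Q N) = a ^ d * det (N - (1 / a) \<cdot>\<^sub>m (Q * P))"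
proof -
  define N' where "N' = N - (1 / a) \<cdot>\<^sub>m (Q * P)"
  have N': "N' \<in> carrier_mat m m" unfolding N'_def using P Q N by auto
  define L where "L = four_block_mat (1\<^sub>m d) (0\<^sub>m d m) ((1 / a) \<cdot>\<^sub>m Q) (1\<^sub>m m)"
  define U where "U = four_block_mat (a \<cdot>\<^sub>m 1\<^sub>m d) P (0\<^sub>m m d) N'"
  have L: "L \<in> carrier_mat (d + m) (d + m)" unfolding L_def using Q by auto
  have U: "U \<in> carrier_mat (d + m) (d + m)" unfolding U_def using P N' by auto
  have "(1 / a) \<cdot>\<^sub>m Q * (a \<cdot>\<^sub>m 1\<^sub>m d) = (1 / a) \<cdot>\<^sub>m (a \<cdot>\<^sub>m (Q * 1\<^sub>m d))"
    using Q by (simp add: mult_smult_assoc_mat[OF _ smult_carrier_mat[OF one_carrier_mat]]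
        mult_smult_distrib[OF Q one_carrier_mat])
  also have "\<dots> = Q" using Q a by (intro eq_matI) auto
  finally have "(1 / a) \<cdot>\<^sub>m Q * (a \<cdot>\<^sub>m 1\<^sub>m d) = Q" .
  moreover have "(1 / a) \<cdot>\<^sub>m Q * P + 1\<^sub>m m * N' = N"
    unfolding N'_def using P Q N by (simp add: mult_smult_assoc_mat) (rule eq_matI, auto)
  ultimately have LU: "L * U = four_block_mat (a \<cdot>\<^sub>m 1\<^sub>m d) P Q N"
    unfolding L_def U_def using P Q N' by (subst mult_four_block_mat) auto
  have "det L = 1" unfolding L_def using Q
    by (subst det_four_block_mat_upper_right_zero[where n = d and m = m]) auto
  moreover have "det U = a ^ d * det N'" unfolding U_def using P N'
    by (subst det_four_block_mat_lower_left_zero[where n = d and m = m]) (auto simp: det_smult)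
  ultimately show ?thesis unfolding LU[symmetric] det_mult[OF L U] N'_def by simp
qed

lemma defect_four_block_mat:
  fixes X B :: "complex mat"
  assumes X: "X \<in> carrier_mat m m" and B: "B \<in> carrier_mat d m"
    and BB: "mat_adjoint B * B = defect X"
  shows "defect (four_block_mat (0\<^sub>m d d) B (0\<^sub>m m d) X) =
    four_block_mat (1\<^sub>m d) (0\<^sub>m d m) (0\<^sub>m m d) (0\<^sub>m m m)"
proof -
  let ?A = "four_block_mat (0\<^sub>m d d) B (0\<^sub>m m d) X"
  have adj: "mat_adjoint ?A = four_block_mat (0\<^sub>m d d) (0\<^sub>m d m) (mat_adjoint B) (mat_adjoint X)"
    unfolding mat_adjoint_four_block_mat[OF zero_carrier_mat B zero_carrier_mat X]
    using X B by (auto intro!: eq_matI)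
  have "mat_adjoint ?A * ?A = four_block_mat (0\<^sub>m d d * 0\<^sub>m d d + 0\<^sub>m d m * 0\<^sub>m m d)
      (0\<^sub>m d d * B + 0\<^sub>m d m * X) (mat_adjoint B * 0\<^sub>m d d + mat_adjoint X * 0\<^sub>m m d)
      (mat_adjoint B * B + mat_adjoint X * X)"
    unfolding adj using X B by (intro mult_four_block_mat) auto
  also have "mat_adjoint B * B + mat_adjoint X * X = 1\<^sub>m m"
    unfolding BB defect_def using X by (intro eq_matI) auto
  finally have "mat_adjoint ?A * ?A = four_block_mat (0\<^sub>m d d) (0\<^sub>m d m) (0\<^sub>m m d) (1\<^sub>m m)"
    using X B by simp
  then show ?thesis unfolding defect_def using X B by (intro eq_matI) auto
qed

text \<open>The off-diagonal blocks of the pencil matrix are -e^(-i theta)/2 B and -e^(i theta)/2 B^*,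
  whose product is D_X/4; take the Schur complement of the corner (z - s) I_d.\<close>
lemma pencil_poly_four_block_mat:
  fixes X B :: "complex mat"
  assumes X: "X \<in> carrier_mat m m" and B: "B \<in> carrier_mat d m"
    and BB: "mat_adjoint B * B = defect X" and zs: "z \<noteq> s"
  shows "poly (pencil_poly (four_block_mat (0\<^sub>m d d) B (0\<^sub>m m d) X) \<theta> s) z
     = (z - s) ^ d * poly (pencil_poly X \<theta> (1 / (4 * (z - s)))) z"
proof -
  define A where "A = four_block_mat (0\<^sub>m d d) B (0\<^sub>m m d) X"
  have A: "A \<in> carrier_mat (d + m) (d + m)" unfolding A_def using B X by auto
  define a where "a = - exp (- \<i> * of_real \<theta>) / 2"
  define b where "b = - exp (\<i> * of_real \<theta>) / 2"
  define N where "N = - char_matrix (herm_part X \<theta>) z"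
  have N: "N \<in> carrier_mat m m" unfolding N_def using X by auto
  have block: "- char_matrix (herm_part A \<theta> + s \<cdot>\<^sub>m defect A) z =
      four_block_mat ((z - s) \<cdot>\<^sub>m 1\<^sub>m d) (a \<cdot>\<^sub>m B) (b \<cdot>\<^sub>m mat_adjoint B) N"
    (is "?L = ?R")
  proof (rule eq_matI)
    fix i j assume "i < dim_row ?R" "j < dim_col ?R"
    then have ij: "i < d + m" "j < d + m" using B N by auto
    have Aij: "A $$ (i',j') = (if i' < d then (if j' < d then 0 else B $$ (i', j' - d))
        else (if j' < d then 0 else X $$ (i' - d, j' - d)))" if "i' < d + m" "j' < d + m" for i' j'
      unfolding A_def using B X that by auto
    show "?L $$ (i,j) = ?R $$ (i,j)"
      using ij A B X N
      by (auto simp: herm_part_index[OF A ij] Aij defect_four_block_mat[OF X B BB, folded A_def]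
          herm_part_index[OF X] char_matrix_def N_def a_def b_def algebra_simps)
  qed (use A B N in \<open>auto simp: char_matrix_def\<close>)
  have "(b \<cdot>\<^sub>m mat_adjoint B) * (a \<cdot>\<^sub>m B) = (b * a) \<cdot>\<^sub>m (mat_adjoint B * B)"
    using B by (intro eq_matI) (auto simp: scalar_prod_def sum_distrib_left mult_ac)
  also have "b * a = 1 / 4" unfolding a_def b_def by (simp add: exp_add[symmetric])
  finally have "(b \<cdot>\<^sub>m mat_adjoint B) * (a \<cdot>\<^sub>m B) = (1 / 4) \<cdot>\<^sub>m defect X"
    unfolding BB .
  then have schur: "N - (1 / (z - s)) \<cdot>\<^sub>m ((b \<cdot>\<^sub>m mat_adjoint B) * (a \<cdot>\<^sub>m B)) =
      - char_matrix (herm_part X \<theta> + (1 / (4 * (z - s))) \<cdot>\<^sub>m defect X) z"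
    unfolding N_def using X by (intro eq_matI) (auto simp: char_matrix_def algebra_simps)
  have "poly (pencil_poly A \<theta> s) z = det ?L"
    unfolding pencil_poly_def by (rule char_poly_matrix[where n = "d + m"]) (use A in auto)
  also have "\<dots> = (z - s) ^ d * det (N - (1 / (z - s)) \<cdot>\<^sub>m ((b \<cdot>\<^sub>m mat_adjoint B) * (a \<cdot>\<^sub>m B)))"
    unfolding block by (rule det_four_block_mat_scalar_corner) (use B N zs in auto)
  also have "\<dots> = (z - s) ^ d * poly (pencil_poly X \<theta> (1 / (4 * (z - s)))) z"
    unfolding schur pencil_poly_def by (subst char_poly_matrix[where n = m]) (use X in auto)
  finally show ?thesis unfolding A_def .
qed

lemma contraction_four_block_mat:
  fixes X B :: "complex mat"
  assumes X: "X \<in> carrier_mat m m" and B: "B \<in> carrier_mat d m"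
    and BB: "mat_adjoint B * B = defect X"
  shows "contraction (four_block_mat (0\<^sub>m d d) B (0\<^sub>m m d) X)"
proof (rule contraction_if_defect_eq_adjoint_mult)
  define E where "E = Matrix.mat d (d + m) (\<lambda>(i,j). if i = j then (1::complex) else 0)"
  show "four_block_mat (0\<^sub>m d d) B (0\<^sub>m m d) X \<in> carrier_mat (d + m) (d + m)" using B X by auto
  show "E \<in> carrier_mat d (d + m)" unfolding E_def by simp
  show "mat_adjoint E * E = defect (four_block_mat (0\<^sub>m d d) B (0\<^sub>m m d) X)"
  proof (rule eq_matI)
    fix j l assume "j < dim_row (defect (four_block_mat (0\<^sub>m d d) B (0\<^sub>m m d) X))"
      "l < dim_col (defect (four_block_mat (0\<^sub>m d d) B (0\<^sub>m m d) X))"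
    then have j: "j < d + m" and l: "l < d + m" using B X by auto
    have "(\<Sum>i<d. cnj (E $$ (i,j)) * E $$ (i,l)) = (\<Sum>i<d. if i = j \<and> i = l then 1 else 0)"
      using j l unfolding E_def by (intro sum.cong refl) auto
    also have "\<dots> = (if j < d \<and> j = l then 1 else 0)"
      by (cases "j = l") (auto simp: sum.delta)
    finally show "(mat_adjoint E * E) $$ (j,l) = defect (four_block_mat (0\<^sub>m d d) B (0\<^sub>m m d) X) $$ (j,l)"
      unfolding mat_adjoint_mult_self_index[OF \<open>E \<in> carrier_mat d (d + m)\<close> j l]
        defect_four_block_mat[OF X B BB] using j l by auto
  qed (use B X in \<open>auto simp: E_def\<close>)
qed

section \<open>Factorization of positive semidefinite matrices\<close>

definition sesq_form :: "complex mat \<Rightarrow> nat \<Rightarrow> (nat \<Rightarrow> complex) \<Rightarrow> (nat \<Rightarrow> complex) \<Rightarrow> complex" where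
  "sesq_form D n f g = (\<Sum>i<n. \<Sum>j<n. cnj (f i) * D $$ (i,j) * g j)"

definition positive_semidef :: "complex mat \<Rightarrow> nat \<Rightarrow> bool" where
  "positive_semidef D n \<longleftrightarrow> D \<in> carrier_mat n n \<and> (\<forall>i<n. \<forall>j<n. D $$ (j,i) = cnj (D $$ (i,j))) \<and>
     (\<forall>f. 0 \<le> Re (sesq_form D n f f))"

definition adjoint_kernel_trivial :: "complex mat \<Rightarrow> bool" where
  "adjoint_kernel_trivial B \<longleftrightarrow>
     (\<forall>x \<in> carrier_vec (dim_row B). mat_adjoint B *\<^sub>v x = 0\<^sub>v (dim_col B) \<longrightarrow> x = 0\<^sub>v (dim_row B))"

lemma sesq_form_eq_cscalar_prod:
  assumes "D \<in> carrier_mat n n"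
  shows "sesq_form D n f f = (D *\<^sub>v Matrix.vec n f) \<bullet>c Matrix.vec n f"
  using assms by (auto simp: sesq_form_def scalar_prod_def sum_distrib_left sum_distrib_right
      atLeast0LessThan mult_ac intro!: sum.cong)

lemma sesq_form_add_left: "sesq_form D n (\<lambda>i. f i + g i) h = sesq_form D n f h + sesq_form D n g h"
  by (simp add: sesq_form_def algebra_simps sum.distrib)

lemma sesq_form_add_right: "sesq_form D n h (\<lambda>i. f i + g i) = sesq_form D n h f + sesq_form D n h g"
  by (simp add: sesq_form_def algebra_simps sum.distrib)

lemma sesq_form_smult_left: "sesq_form D n (\<lambda>i. c * f i) h = cnj c * sesq_form D n f h"
  by (simp add: sesq_form_def sum_distrib_left mult_ac)

lemma sesq_form_smult_right: "sesq_form D n h (\<lambda>i. c * f i) = c * sesq_form D n h f"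
  by (simp add: sesq_form_def sum_distrib_left mult_ac)

lemma sesq_form_unit_left:
  assumes "k < n"
  shows "sesq_form D n (\<lambda>i. if i = k then 1 else 0) h = (\<Sum>j<n. D $$ (k,j) * h j)"
proof -
  have "sesq_form D n (\<lambda>i. if i = k then 1 else 0) h =
      (\<Sum>i<n. if i = k then (\<Sum>j<n. D $$ (i,j) * h j) else 0)"
    unfolding sesq_form_def by (intro sum.cong refl) auto
  then show ?thesis using assms by simp
qed

lemma sesq_form_unit_right:
  assumes "k < n"
  shows "sesq_form D n f (\<lambda>j. if j = k then 1 else 0) = (\<Sum>i<n. cnj (f i) * D $$ (i,k))"
proof -
  have "sesq_form D n f (\<lambda>j. if j = k then 1 else 0) =
      (\<Sum>i<n. \<Sum>j<n. if j = k then cnj (f i) * D $$ (i,j) else 0)"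
    unfolding sesq_form_def by (intro sum.cong refl) auto
  then show ?thesis using assms by simp
qed

lemma sesq_form_unit_unit:
  assumes "k < n"
  shows "sesq_form D n (\<lambda>i. if i = k then 1 else 0) (\<lambda>i. if i = k then 1 else 0) = D $$ (k,k)"
proof -
  have "(\<Sum>j<n. D $$ (k,j) * (if j = k then 1 else 0)) = (\<Sum>j<n. if j = k then D $$ (k,j) else 0)"
    by (intro sum.cong refl) auto
  then show ?thesis unfolding sesq_form_unit_left[OF assms] using assms by simp
qed

lemma sesq_form_add_unit:
  assumes herm: "\<forall>i<n. \<forall>j<n. D $$ (j,i) = cnj (D $$ (i,j))" and k: "k < n"
  defines "e \<equiv> \<lambda>i. if i = k then 1 else (0::complex)"
  shows "sesq_form D n (\<lambda>i. f i + c * e i) (\<lambda>i. f i + c * e i) = sesq_form D n f f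
    + c * cnj (\<Sum>j<n. D $$ (k,j) * f j) + cnj c * (\<Sum>j<n. D $$ (k,j) * f j) + cnj c * c * D $$ (k,k)"
proof -
  have "cnj (f j) * D $$ (j,k) = cnj (D $$ (k,j) * f j)" if "j < n" for j
  proof -
    have "D $$ (j,k) = cnj (D $$ (k,j))" using herm k that by blast
    then show ?thesis by simp
  qed
  then have fe: "sesq_form D n f e = cnj (\<Sum>j<n. D $$ (k,j) * f j)"
    unfolding e_def sesq_form_unit_right[OF k] cnj_sum by (intro sum.cong) auto
  have "sesq_form D n (\<lambda>i. f i + c * e i) (\<lambda>i. f i + c * e i) = sesq_form D n f f
      + c * sesq_form D n f e + (cnj c * sesq_form D n e f + cnj c * (c * sesq_form D n e e))"
    unfolding sesq_form_add_left sesq_form_add_right sesq_form_smult_left sesq_form_smult_right by simp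
  also have "\<dots> = sesq_form D n f f + c * cnj (\<Sum>j<n. D $$ (k,j) * f j)
      + cnj c * (\<Sum>j<n. D $$ (k,j) * f j) + cnj c * c * D $$ (k,k)"
    unfolding fe unfolding e_def sesq_form_unit_unit[OF k] sesq_form_unit_left[OF k]
    by (simp add: algebra_simps)
  finally show ?thesis .
qed

lemma positive_semidefD:
  assumes "positive_semidef D n"
  shows "D \<in> carrier_mat n n" and "\<And>i j. i < n \<Longrightarrow> j < n \<Longrightarrow> D $$ (j,i) = cnj (D $$ (i,j))"
    and "\<And>f. 0 \<le> Re (sesq_form D n f f)"
  using assms unfolding positive_semidef_def by blast+

lemma positive_semidef_diag:
  assumes psd: "positive_semidef D n" and k: "k < n"
  shows "D $$ (k,k) = complex_of_real (Re (D $$ (k,k)))" and "0 \<le> Re (D $$ (k,k))"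
proof -
  have "D $$ (k,k) = cnj (D $$ (k,k))" using positive_semidefD(2)[OF psd k k] .
  then have "Im (D $$ (k,k)) = 0" by (metis cnj.simps(2) complex_cnj_cancel_iff neg_equal_zero)
  then show "D $$ (k,k) = complex_of_real (Re (D $$ (k,k)))" by (simp add: complex_eq_iff)
  show "0 \<le> Re (D $$ (k,k))"
    using positive_semidefD(3)[OF psd, of "\<lambda>i. if i = k then 1 else 0"]
    unfolding sesq_form_unit_unit[OF k] .
qed

text \<open>Testing the form on e_i + c e_j with c = -t D_ji, t small, gives
  0 \<le> |D_ji|^2 (t^2 D_jj - 2t).\<close>
lemma positive_semidef_zero_diag:
  assumes psd: "positive_semidef D n" and i: "i < n" and j: "j < n" and z: "D $$ (i,i) = 0"
  shows "D $$ (j,i) = 0" and "D $$ (i,j) = 0"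
proof -
  have herm: "\<forall>i<n. \<forall>j<n. D $$ (j,i) = cnj (D $$ (i,j))" using positive_semidefD(2)[OF psd] by blast
  define a where "a = D $$ (j,i)"
  define dj where "dj = Re (D $$ (j,j))"
  have dj0: "0 \<le> dj" unfolding dj_def using positive_semidef_diag(2)[OF psd j] .
  have Djj: "D $$ (j,j) = complex_of_real dj" unfolding dj_def using positive_semidef_diag(1)[OF psd j] .
  define t where "t = 1 / (dj + 1)"
  have t0: "0 < t" unfolding t_def using dj0 by simp
  have tdj: "t * dj < 1" unfolding t_def using dj0 by (simp add: field_simps)
  define c where "c = - complex_of_real t * a"
  let ?f = "\<lambda>l. if l = i then 1 else (0::complex)"
  have sa: "(\<Sum>l<n. D $$ (j,l) * ?f l) = a"
  proof -
    have "(\<Sum>l<n. D $$ (j,l) * ?f l) = (\<Sum>l<n. if l = i then D $$ (j,l) else 0)"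
      by (intro sum.cong refl) auto
    then show ?thesis using i unfolding a_def by simp
  qed
  have "0 \<le> Re (sesq_form D n (\<lambda>l. ?f l + c * (if l = j then 1 else 0)) (\<lambda>l. ?f l + c * (if l = j then 1 else 0)))"
    using positive_semidefD(3)[OF psd] by blast
  also have "sesq_form D n (\<lambda>l. ?f l + c * (if l = j then 1 else 0)) (\<lambda>l. ?f l + c * (if l = j then 1 else 0))
     = c * cnj a + cnj c * a + cnj c * c * D $$ (j,j)"
    unfolding sesq_form_add_unit[OF herm j] sa sesq_form_unit_unit[OF i] z by simp
  also have "\<dots> = complex_of_real (t * t * dj - 2 * t) * (a * cnj a)"
    unfolding c_def Djj by (simp add: algebra_simps)
  also have "a * cnj a = complex_of_real ((cmod a)^2)" by (rule complex_norm_square[symmetric])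
  finally have "0 \<le> (t * t * dj - 2 * t) * (cmod a)^2" by (simp flip: of_real_mult)
  moreover have "t * t * dj - 2 * t < 0"
    using mult_strict_left_mono[OF tdj t0] t0 by (simp add: algebra_simps)
  ultimately have a0: "a = 0" by (simp add: mult_le_0_iff zero_le_mult_iff)
  then show "D $$ (j,i) = 0" unfolding a_def .
  moreover have "D $$ (i,j) = cnj (D $$ (j,i))" using herm i j by blast
  ultimately show "D $$ (i,j) = 0" by simp
qed

lemma sesq_form_minus_rank_one:
  "sesq_form (Matrix.mat n n (\<lambda>(i,j). D $$ (i,j) - u i * cnj (u j))) n f f =
    sesq_form D n f f - cnj (\<Sum>j<n. cnj (u j) * f j) * (\<Sum>j<n. cnj (u j) * f j)"
proof -
  have "sesq_form (Matrix.mat n n (\<lambda>(i,j). D $$ (i,j) - u i * cnj (u j))) n f f =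
      (\<Sum>i<n. \<Sum>j<n. cnj (f i) * D $$ (i,j) * f j - (cnj (f i) * u i) * (cnj (u j) * f j))"
    unfolding sesq_form_def by (intro sum.cong refl) (auto simp: algebra_simps)
  also have "\<dots> = sesq_form D n f f - (\<Sum>i<n. cnj (f i) * u i) * (\<Sum>j<n. cnj (u j) * f j)"
    unfolding sesq_form_def sum_subtractf sum_product ..
  also have "(\<Sum>i<n. cnj (f i) * u i) = cnj (\<Sum>j<n. cnj (u j) * f j)"
    unfolding cnj_sum by (simp add: mult.commute)
  finally show ?thesis .
qed

text \<open>Completing the square: the form of D - u u^* at f is that of D at f - (a / D_kk) e_k,
  where a is the k-th entry of D f.\<close>
lemma positive_semidef_rank_one_update:
  assumes psd: "positive_semidef D n" and k: "k < n" and dpos: "0 < Re (D $$ (k,k))"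
    and u: "u = (\<lambda>j. D $$ (j,k) / complex_of_real (sqrt (Re (D $$ (k,k)))))"
  shows "positive_semidef (Matrix.mat n n (\<lambda>(i,j). D $$ (i,j) - u i * cnj (u j))) n"
proof -
  define dl where "dl = Re (D $$ (k,k))"
  define sq where "sq = sqrt dl"
  have sqsq: "sq * sq = dl" unfolding sq_def using dpos dl_def by simp
  have Dkk: "D $$ (k,k) = complex_of_real dl" unfolding dl_def using positive_semidef_diag(1)[OF psd k] .
  have u': "u = (\<lambda>j. D $$ (j,k) / complex_of_real sq)" unfolding u sq_def dl_def ..
  have herm: "\<forall>i<n. \<forall>j<n. D $$ (j,i) = cnj (D $$ (i,j))" using positive_semidefD(2)[OF psd] by blast
  define D' where "D' = Matrix.mat n n (\<lambda>(i,j). D $$ (i,j) - u i * cnj (u j))"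
  have "0 \<le> Re (sesq_form D' n f f)" for f
  proof -
    define a where "a = (\<Sum>j<n. D $$ (k,j) * f j)"
    have "cnj (u j) * f j = D $$ (k,j) * f j / complex_of_real sq" if "j < n" for j
    proof -
      have "D $$ (k,j) = cnj (D $$ (j,k))" using herm k that by blast
      then show ?thesis unfolding u' by simp
    qed
    then have s2: "(\<Sum>j<n. cnj (u j) * f j) = a / complex_of_real sq"
      unfolding a_def sum_divide_distrib by (intro sum.cong) auto
    have "sesq_form D' n f f = sesq_form D n f f - cnj a * a / complex_of_real dl"
      unfolding D'_def sesq_form_minus_rank_one s2 sqsq[symmetric] by simp
    also have "\<dots> = sesq_form D n (\<lambda>i. f i + (- a / complex_of_real dl) * (if i = k then 1 else 0))
        (\<lambda>i. f i + (- a / complex_of_real dl) * (if i = k then 1 else 0))"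
      unfolding sesq_form_add_unit[OF herm k] a_def[symmetric] Dkk using dpos dl_def
      by (simp add: field_simps)
    finally show ?thesis using positive_semidefD(3)[OF psd] by simp
  qed
  moreover have "D' $$ (j,i) = cnj (D' $$ (i,j))" if "i < n" "j < n" for i j
  proof -
    have "D $$ (j,i) = cnj (D $$ (i,j))" using herm that by blast
    then show ?thesis using that unfolding D'_def by simp
  qed
  moreover have "D' \<in> carrier_mat n n" unfolding D'_def by simp
  ultimately show ?thesis unfolding positive_semidef_def D'_def[symmetric] by blast
qed

lemma positive_semidef_deflate:
  assumes psd: "positive_semidef D n" and k: "k < n" and Dkk: "D $$ (k,k) \<noteq> 0"
    and u: "u = (\<lambda>j. D $$ (j,k) / complex_of_real (sqrt (Re (D $$ (k,k)))))"
    and D': "D' = Matrix.mat n n (\<lambda>(i,j). D $$ (i,j) - u i * cnj (u j))"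
  shows "positive_semidef D' n" and "u k \<noteq> 0" and "D' $$ (k,k) = 0"
    and "card {i. i < n \<and> D' $$ (i,i) \<noteq> 0} < card {i. i < n \<and> D $$ (i,i) \<noteq> 0}"
proof -
  define dl where "dl = Re (D $$ (k,k))"
  have Dkk': "D $$ (k,k) = complex_of_real dl" unfolding dl_def using positive_semidef_diag(1)[OF psd k] .
  have dpos: "0 < dl"
    using positive_semidef_diag(2)[OF psd k] Dkk Dkk' unfolding dl_def by (metis of_real_0 order_le_less)
  show "positive_semidef D' n"
    unfolding D' by (rule positive_semidef_rank_one_update[OF psd k _ u]) (use dpos dl_def in simp)
  have uk: "u k = complex_of_real (sqrt dl)"
    unfolding u Dkk' dl_def[symmetric] using dpos by (simp flip: of_real_divide add: real_div_sqrt)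
  then show "u k \<noteq> 0" using dpos by simp
  show D'kk: "D' $$ (k,k) = 0"
    unfolding D' using k uk Dkk' dpos by (simp flip: of_real_mult)
  have "{i. i < n \<and> D' $$ (i,i) \<noteq> 0} \<subseteq> {i. i < n \<and> D $$ (i,i) \<noteq> 0} - {k}"
  proof
    fix i assume "i \<in> {i. i < n \<and> D' $$ (i,i) \<noteq> 0}"
    then have i: "i < n" and nz: "D' $$ (i,i) \<noteq> 0" by auto
    have "D $$ (i,i) \<noteq> 0"
    proof
      assume z: "D $$ (i,i) = 0"
      then have "u i = 0" unfolding u using positive_semidef_zero_diag(2)[OF psd i k] by simp
      then show False using nz i z unfolding D' by simp
    qed
    then show "i \<in> {i. i < n \<and> D $$ (i,i) \<noteq> 0} - {k}" using i nz D'kk by auto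
  qed
  then have "card {i. i < n \<and> D' $$ (i,i) \<noteq> 0} \<le> card ({i. i < n \<and> D $$ (i,i) \<noteq> 0} - {k})"
    by (intro card_mono) auto
  also have "\<dots> < card {i. i < n \<and> D $$ (i,i) \<noteq> 0}"
    by (rule card_Diff1_less) (use k Dkk in auto)
  finally show "card {i. i < n \<and> D' $$ (i,i) \<noteq> 0} < card {i. i < n \<and> D $$ (i,i) \<noteq> 0}" .
qed

lemma mat_adjoint_mult_self_diag_zero:
  fixes B :: "complex mat"
  assumes B: "B \<in> carrier_mat r n" and k: "k < n" and z: "(mat_adjoint B * B) $$ (k,k) = 0"
    and i: "i < r"
  shows "B $$ (i,k) = 0"
proof -
  have "cnj w * w = complex_of_real ((cmod w)^2)" for w :: complex
    by (metis complex_norm_square mult.commute)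
  then have "(\<Sum>i<r. complex_of_real ((cmod (B $$ (i,k)))^2)) = 0"
    using z unfolding mat_adjoint_mult_self_index[OF B k k] by simp
  then have "(\<Sum>i<r. (cmod (B $$ (i,k)))^2) = 0"
    by (metis of_real_0 of_real_eq_iff of_real_sum)
  then show ?thesis using i by (subst (asm) sum_nonneg_eq_0_iff) auto
qed

lemma adjoint_kernel_trivial_add_row:
  fixes B' :: "complex mat" and u :: "nat \<Rightarrow> complex"
  assumes B': "B' \<in> carrier_mat r n" and k: "k < n" and uk: "u k \<noteq> 0"
    and colk: "\<And>i. i < r \<Longrightarrow> B' $$ (i,k) = 0" and ker: "adjoint_kernel_trivial B'"
    and B: "B = Matrix.mat (Suc r) n (\<lambda>(i,j). if i = 0 then cnj (u j) else B' $$ (i - 1, j))"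
  shows "adjoint_kernel_trivial B"
  unfolding adjoint_kernel_trivial_def
proof (intro ballI impI)
  have B_car: "B \<in> carrier_mat (Suc r) n" unfolding B by simp
  fix x :: "complex Matrix.vec" assume x: "x \<in> carrier_vec (dim_row B)"
    and Bx: "mat_adjoint B *\<^sub>v x = 0\<^sub>v (dim_col B)"
  then have x: "x \<in> carrier_vec (Suc r)" using B_car by simp
  define x' where "x' = Matrix.vec r (\<lambda>i. x $ Suc i)"
  have x': "x' \<in> carrier_vec r" unfolding x'_def by simp
  have comp: "(mat_adjoint B *\<^sub>v x) $ j = u j * x $ 0 + (mat_adjoint B' *\<^sub>v x') $ j" if "j < n" for j
    unfolding mat_adjoint_mult_vec_index[OF B_car x that] mat_adjoint_mult_vec_index[OF B' x' that]
      sum.lessThan_Suc_shift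
    using that by (simp add: B x'_def)
  have "u k * x $ 0 = 0"
    using comp[OF k] Bx B_car k colk by (simp add: mat_adjoint_mult_vec_index[OF B' x' k])
  then have x0: "x $ 0 = 0" using uk by simp
  have "mat_adjoint B' *\<^sub>v x' = 0\<^sub>v n"
    by (rule eq_vecI) (use comp x0 Bx B_car B' in auto)
  then have "x' = 0\<^sub>v r" using ker x' B' unfolding adjoint_kernel_trivial_def by auto
  then have "x $ Suc i = 0" if "i < r" for i
    using that unfolding x'_def by (metis index_vec index_zero_vec(1))
  then show "x = 0\<^sub>v (dim_row B)"
    using x x0 B_car by (intro eq_vecI) (auto simp: less_Suc_eq_0_disj)
qed

text \<open>Induction on the number of nonzero diagonal entries: splitting off the rank-one part
  u u^* of a nonzero column k leaves a positive semidefinite matrix vanishing in row and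
  column k, and u^* becomes the new first row of the factor.\<close>
lemma positive_semidef_factor:
  assumes "positive_semidef D n"
  obtains r B where "B \<in> carrier_mat r n" "mat_adjoint B * B = D" "adjoint_kernel_trivial B"
proof -
  have "\<exists>r B. B \<in> carrier_mat r n \<and> mat_adjoint B * B = D \<and> adjoint_kernel_trivial B"
    using assms
  proof (induction "card {i. i < n \<and> D $$ (i,i) \<noteq> 0}" arbitrary: D rule: less_induct)
    case less
    note psd = less.prems
    have D: "D \<in> carrier_mat n n" using positive_semidefD(1)[OF psd] .
    show ?case
    proof (cases "\<exists>k<n. D $$ (k,k) \<noteq> 0")
      case False
      then have "D = 0\<^sub>m n n"
        using positive_semidef_zero_diag(2)[OF psd] D by (intro eq_matI) auto
      moreover have "mat_adjoint (0\<^sub>m 0 n) * 0\<^sub>m 0 n = (0\<^sub>m n n :: complex mat)"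
        by (rule eq_matI) (auto simp: scalar_prod_def)
      moreover have "adjoint_kernel_trivial (0\<^sub>m 0 n :: complex mat)"
        unfolding adjoint_kernel_trivial_def by (auto intro!: eq_vecI)
      ultimately show ?thesis by (metis zero_carrier_mat)
    next
      case True
      then obtain k where k: "k < n" "D $$ (k,k) \<noteq> 0" by auto
      define u where "u = (\<lambda>j. D $$ (j,k) / complex_of_real (sqrt (Re (D $$ (k,k)))))"
      define D' where "D' = Matrix.mat n n (\<lambda>(i,j). D $$ (i,j) - u i * cnj (u j))"
      note defl = positive_semidef_deflate[OF psd k u_def D'_def]
      obtain r B' where B': "B' \<in> carrier_mat r n" "mat_adjoint B' * B' = D'" "adjoint_kernel_trivial B'"
        using less.hyps[OF defl(4) defl(1)] by blast
      have colk: "B' $$ (i,k) = 0" if "i < r" for i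
        using mat_adjoint_mult_self_diag_zero[OF B'(1) k(1) _ that] B'(2) defl(3) by simp
      define B where "B = Matrix.mat (Suc r) n (\<lambda>(i,j). if i = 0 then cnj (u j) else B' $$ (i - 1, j))"
      have B_car: "B \<in> carrier_mat (Suc r) n" unfolding B_def by simp
      have "(mat_adjoint B * B) $$ (j,l) = D $$ (j,l)" if "j < n" "l < n" for j l
        unfolding mat_adjoint_mult_self_index[OF B_car that] sum.lessThan_Suc_shift
        using that B'(1) arg_cong[OF B'(2), of "\<lambda>M. M $$ (j,l)"]
        by (simp add: B_def D'_def mat_adjoint_mult_self_index[OF B'(1) that])
      then have "mat_adjoint B * B = D" using B_car D by (intro eq_matI) auto
      then show ?thesis
        using B_car adjoint_kernel_trivial_add_row[OF B'(1) k(1) defl(2) colk B'(3) B_def] by blast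
    qed
  qed
  then show ?thesis using that by blast
qed

lemma adjoint_kernel_trivial_right_inverse:
  fixes B :: "complex mat"
  assumes B: "B \<in> carrier_mat r n" and ker: "adjoint_kernel_trivial B"
  obtains R where "R \<in> carrier_mat n r" and "B * R = 1\<^sub>m r"
proof -
  define G where "G = B * mat_adjoint B"
  have G: "G \<in> carrier_mat r r" unfolding G_def using B by auto
  have "x = 0\<^sub>v r" if x: "x \<in> carrier_vec r" and Gx: "G *\<^sub>v x = 0\<^sub>v r" for x
  proof -
    define y where "y = mat_adjoint B *\<^sub>v x"
    have y: "y \<in> carrier_vec n" unfolding y_def using mult_mat_vec_carrier[OF mat_adjoint_carrier[OF B] x] .
    have "y \<bullet>c y = x \<bullet>c (G *\<^sub>v x)"
      using cscalar_prod_mat_adjoint[OF B x y] assoc_mult_mat_vec[OF B mat_adjoint_carrier[OF B] x]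
      unfolding G_def y_def by simp
    then have "y = 0\<^sub>v n" using Gx x y by simp
    then show ?thesis using ker x B unfolding adjoint_kernel_trivial_def y_def by auto
  qed
  then have "det G \<noteq> 0" using det_0_iff_vec_prod_zero_field[OF G] by auto
  then obtain Gi where Gi: "Gi \<in> carrier_mat r r" "G * Gi = 1\<^sub>m r"
    using det_non_zero_imp_unit[OF G] unfolding Units_def by (auto simp: ring_mat_simps)
  show ?thesis
  proof (rule that)
    show "mat_adjoint B * Gi \<in> carrier_mat n r" using B Gi by auto
    show "B * (mat_adjoint B * Gi) = 1\<^sub>m r"
      using Gi assoc_mult_mat[OF B mat_adjoint_carrier[OF B] Gi(1)] unfolding G_def by simp
  qed
qed

lemma mat_rank_right_invertible:
  fixes B R :: "complex mat"
  assumes B: "B \<in> carrier_mat r n" and R: "R \<in> carrier_mat n r" and BR: "B * R = 1\<^sub>m r"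
  shows "mat_rank B = r"
proof -
  have "B *\<^sub>v (R *\<^sub>v y) = y" if "y \<in> carrier_vec r" for y
    using that BR assoc_mult_mat_vec[OF B R that] by simp
  then have "vec_space.col_space r B = carrier_vec r"
    unfolding vec_space.col_space_eq[OF B] using B R by (auto intro: mult_mat_vec_carrier)
  moreover have "module_vec TYPE(complex) r\<lparr>carrier := carrier_vec r\<rparr> = module_vec TYPE(complex) r"
    by (simp add: module_vec_def)
  ultimately have "vec_space.rank r B = vectorspace.dim class_ring (module_vec TYPE(complex) r)"
    unfolding vec_space.rank_def vec_space.col_space_def by metis
  then show ?thesis unfolding mat_rank_def using B vec_space.dim_is_n by simp
qed

lemma rank_mat_adjoint_if_kernel_trivial:
  fixes B :: "complex mat"
  assumes B: "B \<in> carrier_mat r n" and ker: "adjoint_kernel_trivial B"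
  shows "vec_space.rank n (mat_adjoint B) = r"
proof -
  have aB: "mat_adjoint B \<in> carrier_mat n r" using B by simp
  have inj: "x = 0\<^sub>v r" if "x \<in> carrier_vec r" "mat_adjoint B *\<^sub>v x = 0\<^sub>v n" for x
    using ker B that unfolding adjoint_kernel_trivial_def by auto
  have col: "col (mat_adjoint B) i = mat_adjoint B *\<^sub>v unit_vec r i" if "i < r" for i
    using aB that by (auto intro!: eq_vecI simp: col_def scalar_prod_def unit_vec_def
        sum.cong[OF refl] if_distrib cong: if_cong)
  have dist: "distinct (cols (mat_adjoint B))"
  proof (rule ccontr)
    assume "\<not> distinct (cols (mat_adjoint B))"
    then obtain i j where ij: "i < r" "j < r" "i \<noteq> j" "col (mat_adjoint B) i = col (mat_adjoint B) j"
      using aB by (auto simp: distinct_conv_nth)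
    then have "mat_adjoint B *\<^sub>v (unit_vec r i - unit_vec r j) = 0\<^sub>v n"
      using col aB by (simp add: mult_minus_distrib_mat_vec[OF aB unit_vec_carrier unit_vec_carrier])
    then have "unit_vec r i - unit_vec r j = (0\<^sub>v r :: complex Matrix.vec)"
      by (intro inj) auto
    then have "(unit_vec r i - unit_vec r j) $ i = (0 :: complex)" using ij(1) by simp
    then show False using ij by simp
  qed
  have "\<not> module.lin_dep class_ring (module_vec TYPE(complex) n) (set (cols (mat_adjoint B)))"
    using vec_space.lin_depE[OF aB _ dist] inj by metis
  then show ?thesis by (rule vec_space.lin_indpt_full_rank[OF aB dist])
qed

lemma mat_rank_mat_adjoint_mult_self:
  fixes B :: "complex mat"
  assumes B: "B \<in> carrier_mat r n" and ker: "adjoint_kernel_trivial B"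
  shows "mat_rank (mat_adjoint B * B) = r"
proof -
  obtain R where R: "R \<in> carrier_mat n r" "B * R = 1\<^sub>m r"
    using adjoint_kernel_trivial_right_inverse[OF B ker] .
  have aB: "mat_adjoint B \<in> carrier_mat n r" using B by simp
  have D: "mat_adjoint B * B \<in> carrier_mat n n" using mult_carrier_mat[OF aB B] .
  have "{y \<in> carrier_vec n. \<exists>x \<in> carrier_vec n. (mat_adjoint B * B) *\<^sub>v x = y} =
      {y \<in> carrier_vec n. \<exists>x \<in> carrier_vec r. mat_adjoint B *\<^sub>v x = y}"
  proof (intro Collect_cong conj_cong refl iffI)
    fix y assume "\<exists>x \<in> carrier_vec n. (mat_adjoint B * B) *\<^sub>v x = y"
    then obtain x where x: "x \<in> carrier_vec n" "(mat_adjoint B * B) *\<^sub>v x = y" by blast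
    then have "mat_adjoint B *\<^sub>v (B *\<^sub>v x) = y" using assoc_mult_mat_vec[OF aB B x(1)] by simp
    then show "\<exists>x \<in> carrier_vec r. mat_adjoint B *\<^sub>v x = y" using mult_mat_vec_carrier[OF B x(1)] by blast
  next
    fix y assume "\<exists>x \<in> carrier_vec r. mat_adjoint B *\<^sub>v x = y"
    then obtain x where x: "x \<in> carrier_vec r" "mat_adjoint B *\<^sub>v x = y" by blast
    have "(mat_adjoint B * B) *\<^sub>v (R *\<^sub>v x) = mat_adjoint B *\<^sub>v ((B * R) *\<^sub>v x)"
      using assoc_mult_mat_vec[OF aB B mult_mat_vec_carrier[OF R(1) x(1)]] assoc_mult_mat_vec[OF B R(1) x(1)]
      by simp
    then have "(mat_adjoint B * B) *\<^sub>v (R *\<^sub>v x) = y" using R(2) x by simp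
    then show "\<exists>x \<in> carrier_vec n. (mat_adjoint B * B) *\<^sub>v x = y" using mult_mat_vec_carrier[OF R(1) x(1)] by blast
  qed
  then have "vec_space.col_space n (mat_adjoint B * B) = vec_space.col_space n (mat_adjoint B)"
    unfolding vec_space.col_space_eq[OF D] vec_space.col_space_eq[OF aB] using B D by simp
  then have "vec_space.rank n (mat_adjoint B * B) = vec_space.rank n (mat_adjoint B)"
    unfolding vec_space.rank_def vec_space.col_space_def by metis
  then show ?thesis unfolding mat_rank_def using rank_mat_adjoint_if_kernel_trivial[OF B ker] B by simp
qed

section \<open>The tower\<close>

lemma contraction_positive_semidef_defect:
  fixes X :: "complex mat"
  assumes X: "X \<in> carrier_mat m m" and c: "contraction X"
  shows "positive_semidef (defect X) m"
  unfolding positive_semidef_def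
proof (intro conjI allI impI)
  show "defect X \<in> carrier_mat m m" using X by simp
  have entry: "defect X $$ (a,b) = (if a = b then 1 else 0) - (\<Sum>k<m. cnj (X $$ (k,a)) * X $$ (k,b))"
    if "a < m" "b < m" for a b
    using X that by (simp add: defect_def mat_adjoint_mult_self_index[OF X that])
  fix i j assume "i < m" "j < m"
  then show "defect X $$ (j,i) = cnj (defect X $$ (i,j))"
    by (simp add: entry cnj_sum mult.commute)
next
  fix f
  show "0 \<le> Re (sesq_form (defect X) m f f)"
    unfolding sesq_form_eq_cscalar_prod[OF defect_carrier[OF X]]
    using c unfolding contraction_iff_defect_nonneg[OF X] by simp
qed

lemma is_defect_factor_defect_factor:
  fixes X :: "complex mat"
  assumes X: "X \<in> carrier_mat m m" and c: "contraction X"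
  shows "is_defect_factor X (defect_factor X)"
proof -
  obtain r B where B: "B \<in> carrier_mat r m" "mat_adjoint B * B = defect X" "adjoint_kernel_trivial B"
    using positive_semidef_factor[OF contraction_positive_semidef_defect[OF X c]] .
  obtain R where "R \<in> carrier_mat m r" "B * R = 1\<^sub>m r"
    using adjoint_kernel_trivial_right_inverse[OF B(1,3)] .
  then have "is_defect_factor X B"
    unfolding is_defect_factor_def
    using B X mat_rank_right_invertible mat_rank_mat_adjoint_mult_self[OF B(1,3)] by auto
  then show ?thesis unfolding defect_factor_def by (rule someI)
qed

lemma tower_step_four_block_mat:
  fixes X :: "complex mat"
  assumes X: "X \<in> carrier_mat m m" and c: "contraction X"
  obtains d B where "B \<in> carrier_mat d m" and "mat_adjoint B * B = defect X"
    and "tower_step X = four_block_mat (0\<^sub>m d d) B (0\<^sub>m m d) X"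
proof -
  have "is_defect_factor X (defect_factor X)" by (rule is_defect_factor_defect_factor[OF X c])
  then have B: "defect_factor X \<in> carrier_mat (mat_rank (defect X)) (dim_col X)"
    and BB: "mat_adjoint (defect_factor X) * defect_factor X = defect X"
    unfolding is_defect_factor_def by blast+
  show ?thesis
  proof (rule that)
    show "defect_factor X \<in> carrier_mat (mat_rank (defect X)) m" using B X by simp
    show "tower_step X = four_block_mat (0\<^sub>m (mat_rank (defect X)) (mat_rank (defect X)))
        (defect_factor X) (0\<^sub>m m (mat_rank (defect X))) X"
      using carrier_matD[OF B] X unfolding tower_step_def Let_def by simp
  qed (rule BB)
qed

lemma tower_0 [simp]: "tower C 0 = C"
  by (simp add: tower_def)

lemma tower_Suc [simp]: "tower C (Suc j) = tower_step (tower C j)"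
  by (simp add: tower_def)

lemma tower_square_contraction:
  assumes "C \<in> carrier_mat n n" and "contraction C"
  shows "\<exists>m. tower C j \<in> carrier_mat m m \<and> contraction (tower C j)"
proof (induction j)
  case 0
  then show ?case using assms by auto
next
  case (Suc j)
  then obtain m where X: "tower C j \<in> carrier_mat m m" "contraction (tower C j)" by auto
  then obtain d B where B: "B \<in> carrier_mat d m" "mat_adjoint B * B = defect (tower C j)"
    and step: "tower_step (tower C j) = four_block_mat (0\<^sub>m d d) B (0\<^sub>m m d) (tower C j)"
    by (rule tower_step_four_block_mat)
  have "tower C (Suc j) \<in> carrier_mat (d + m) (d + m)" using B X step by auto
  moreover have "contraction (tower C (Suc j))"
    using contraction_four_block_mat[OF X(1) B] step by simp
  ultimately show ?case by blast
qed

lemma pencil_rotation_invariant_tower_step: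
  fixes X :: "complex mat"
  assumes X: "X \<in> carrier_mat m m" and c: "contraction X"
    and inv: "\<And>s. pencil_rotation_invariant X s"
  shows "pencil_rotation_invariant (tower_step X) s"
proof -
  obtain d B where B: "B \<in> carrier_mat d m" "mat_adjoint B * B = defect X"
    and step: "tower_step X = four_block_mat (0\<^sub>m d d) B (0\<^sub>m m d) X"
    by (rule tower_step_four_block_mat[OF X c])
  have "poly (pencil_poly (tower_step X) \<theta> s) z = poly (pencil_poly (tower_step X) 0 s) z"
    if "z \<in> UNIV - {s}" for \<theta> z
  proof -
    have zs: "z \<noteq> s" using that by simp
    have "pencil_poly X \<theta> (1 / (4 * (z - s))) = pencil_poly X 0 (1 / (4 * (z - s)))"
      using inv unfolding pencil_rotation_invariant_def by blast
    then show ?thesis unfolding step pencil_poly_four_block_mat[OF X B zs] by simp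
  qed
  moreover have "infinite (UNIV - {s})" using infinite_UNIV_char_0 by auto
  ultimately show ?thesis
    unfolding pencil_rotation_invariant_def using poly_eq_if_agree_on_infinite by blast
qed

lemma pencil_rotation_invariant_tower:
  assumes C: "C \<in> carrier_mat n n" and c: "contraction C"
    and inv: "\<And>s. pencil_rotation_invariant C s"
  shows "pencil_rotation_invariant (tower C j) s"
proof (induction j arbitrary: s)
  case 0
  then show ?case using inv by simp
next
  case (Suc j)
  obtain m where "tower C j \<in> carrier_mat m m" "contraction (tower C j)"
    using tower_square_contraction[OF C c] by blast
  then show ?case using pencil_rotation_invariant_tower_step Suc.IH by simp
qed

definition shift_orbit :: "real \<Rightarrow> nat \<Rightarrow> real" where
  "shift_orbit x k = ((\<lambda>y. 1 / (4 * (x - y))) ^^ k) 0"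

lemma shift_orbit_0 [simp]: "shift_orbit x 0 = 0"
  by (simp add: shift_orbit_def)

lemma shift_orbit_Suc [simp]: "shift_orbit x (Suc k) = 1 / (4 * (x - shift_orbit x k))"
  by (simp add: shift_orbit_def)

lemma shift_orbit_bounds:
  assumes "1 \<le> x"
  shows "0 \<le> shift_orbit x k" and "shift_orbit x k < 1 / 2"
proof -
  have "0 \<le> shift_orbit x k \<and> shift_orbit x k < 1 / 2"
  proof (induction k)
    case (Suc k)
    then have "2 < 4 * (x - shift_orbit x k)" using assms by simp
    then show ?case by (simp add: field_simps)
  qed simp
  then show "0 \<le> shift_orbit x k" and "shift_orbit x k < 1 / 2" by blast+
qed

lemma strict_mono_shift_orbit:
  assumes x: "1 \<le> x"
  shows "strict_mono (shift_orbit x)"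
proof -
  have "shift_orbit x k < shift_orbit x (Suc k)" for k
  proof (induction k)
    case 0
    then show ?case using x by simp
  next
    case (Suc k)
    have "0 < x - shift_orbit x (Suc k)" using shift_orbit_bounds[OF x, of "Suc k"] x by linarith
    then show ?case using Suc.IH by (simp add: divide_strict_left_mono)
  qed
  then show ?thesis by (simp add: strict_mono_Suc_iff)
qed

lemma pencil_rotation_invariant_along_shift_orbit:
  assumes C: "C \<in> carrier_mat n n" and c: "contraction C"
    and inv: "\<And>j. pencil_rotation_invariant (tower C j) 0" and x: "1 \<le> x"
  shows "poly (pencil_poly (tower C j) \<theta> (of_real (shift_orbit x k))) (of_real x) =
    poly (pencil_poly (tower C j) 0 (of_real (shift_orbit x k))) (of_real x)"
proof (induction k arbitrary: j)
  case 0
  have "pencil_poly (tower C j) \<theta> 0 = pencil_poly (tower C j) 0 0"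
    using inv[of j] unfolding pencil_rotation_invariant_def by blast
  then show ?case by simp
next
  case (Suc k)
  obtain m where X: "tower C j \<in> carrier_mat m m" "contraction (tower C j)"
    using tower_square_contraction[OF C c] by blast
  obtain d B where B: "B \<in> carrier_mat d m" "mat_adjoint B * B = defect (tower C j)"
    and step: "tower_step (tower C j) = four_block_mat (0\<^sub>m d d) B (0\<^sub>m m d) (tower C j)"
    by (rule tower_step_four_block_mat[OF X])
  let ?s = "shift_orbit x k"
  have "?s < x" using shift_orbit_bounds[OF x, of k] x by linarith
  then have ne: "complex_of_real x \<noteq> of_real ?s" by (metis less_irrefl of_real_eq_iff)
  have shift: "1 / (4 * (complex_of_real x - of_real ?s)) = of_real (shift_orbit x (Suc k))"
    by simp
  have "(of_real x - of_real ?s) ^ d * poly (pencil_poly (tower C j) \<theta> (of_real (shift_orbit x (Suc k)))) (of_real x) =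
      (of_real x - of_real ?s) ^ d * poly (pencil_poly (tower C j) 0 (of_real (shift_orbit x (Suc k)))) (of_real x)"
    using Suc.IH[of "Suc j"] unfolding tower_Suc step pencil_poly_four_block_mat[OF X(1) B ne] shift .
  then show ?case using ne by simp
qed

lemma pencil_rotation_invariant_of_tower:
  assumes C: "C \<in> carrier_mat n n" and c: "contraction C"
    and inv: "\<And>j. pencil_rotation_invariant (tower C j) 0"
  shows "pencil_rotation_invariant C s"
proof -
  have at_x: "poly (pencil_poly C \<theta> s) (of_real x) = poly (pencil_poly C 0 s) (of_real x)"
    if x: "1 \<le> x" for \<theta> x
  proof (rule pencil_poly_eval_eq_if_infinite_shifts[OF C])
    show "infinite (range (\<lambda>k. complex_of_real (shift_orbit x k)))"
      using strict_mono_imp_inj_on[OF strict_mono_shift_orbit[OF x]]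
      by (intro range_inj_infinite) (auto simp: inj_on_def)
    show "poly (pencil_poly C \<theta> s') (of_real x) = poly (pencil_poly C 0 s') (of_real x)"
      if "s' \<in> range (\<lambda>k. complex_of_real (shift_orbit x k))" for s'
      using that pencil_rotation_invariant_along_shift_orbit[OF C c inv x, of 0] by auto
  qed
  have inf: "infinite (range (\<lambda>k::nat. complex_of_real (real k + 1)))"
    by (intro range_inj_infinite) (auto simp: inj_on_def)
  have "poly (pencil_poly C \<theta> s) z = poly (pencil_poly C 0 s) z"
    if "z \<in> range (\<lambda>k::nat. complex_of_real (real k + 1))" for \<theta> z
  proof -
    from that obtain k :: nat where "z = complex_of_real (real k + 1)" by blast
    then show ?thesis using at_x[of "real k + 1"] by simp
  qed
  then show ?thesis
    unfolding pencil_rotation_invariant_def using poly_eq_if_agree_on_infinite[OF inf] by blast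
qed

theorem mainTheorem4:
  fixes C :: "complex mat" and n :: nat
  assumes "C \<in> carrier_mat n n"
    and "contraction C"
  shows "(\<forall>j. circularity (tower C j)) \<longleftrightarrow> defect_pencil_circularity C"
proof -
  have "circularity (tower C j) \<longleftrightarrow> pencil_rotation_invariant (tower C j) 0" for j
    using tower_square_contraction[OF assms] circularity_iff_pencil_rotation_invariant by blast
  then have "(\<forall>j. circularity (tower C j)) \<longleftrightarrow> (\<forall>j. pencil_rotation_invariant (tower C j) 0)"
    by blast
  also have "\<dots> \<longleftrightarrow> (\<forall>s. pencil_rotation_invariant C s)"
    using pencil_rotation_invariant_tower[OF assms] pencil_rotation_invariant_of_tower[OF assms] by blast
  also have "\<dots> \<longleftrightarrow> defect_pencil_circularity C"
    using defect_pencil_circularity_iff[OF assms(1)] by simp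
  finally show ?thesis .
qed

end
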